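(* Let $0<3x_0<L$, $\gamma=\gamma(x_0,L)$, $\lambda=\lambda(x_0,L)=\frac{2L}{L+x_0}$, and let $\mathcal V$ be an admissible variation of $\gamma$, with $\varphi,\psi$ defined by $X=\varphi N+\varphi_\tau\dot\gamma$, $X'=\psi N+\psi_\tau\dot\gamma$. Then $$\left.\frac{d^2(\mathcal F-\lambda\mathcal A)(\mathcal V(\cdot,t))}{dt^2}\right|_{t=0}=\int_0^{2L}\Big((2-\lambda)H\varphi^2-\frac{2\dot\varphi^2}{H}+\frac{2\ddot\varphi^2}{H^3}\Big)ds+\Big[\frac{\dot\psi}{H^2}\Big]_0^{2L}\ \ge\ \int_0^{2L}\Big((2-\lambda)H\varphi^2-\frac{2\dot\varphi^2}{H}+\frac{2\ddot\varphi^2}{H^3}\Big)ds.$$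
   Context: Notation: $(\xi,\eta)^\perp=(\eta,-\xi)$; for a regular curve $\gamma\in C^2([0,2L],\mathbb R^2)$, curvature $H=\langle\dot\gamma,\ddot\gamma^\perp\rangle/|\dot\gamma|^3$, normal $N=\dot\gamma^\perp/|\dot\gamma|$; strictly counterclockwise means $H>0$. A curve $\gamma=(x,y)$ is admissible if $\gamma\in C^\infty([0,2L],\mathbb R^2)$ is regular, strictly counterclockwise, injective, $\gamma(0)=(x_0,0)$, $\gamma(2L)=(-x_0,0)$, $y>0$ on $(0,2L)$. $\mathcal A(\gamma)=\frac12\int_0^{2L}(x\dot y-\dot xy)ds$, $\mathcal F(\gamma)=\int_0^{2L}|\dot\gamma|H^{-1}ds$. An admissible variation is a smooth $\mathcal V:[0,2L]\times[-t_{\mathcal V},t_{\mathcal V}]\to\mathbb R^2$ with $\mathcal V(\cdot,0)=\gamma$ and every $\mathcal V(\cdot,t)$ admissible; $X=\partial_t\mathcal V|_{t=0}$, $X'=\partial_t^2\mathcal V|_{t=0}$. For $0<3x_0<L$: with $\sigma=\pi\sqrt{x_0/(L+x_0)}$, $k=L/\sin\sigma$, $a(s)=\arcsin((s-L)/k)$, $\gamma(x_0,L)=(x,y)$ on $[0,2L]$ with $x(s)=-\frac k2\big(\frac{\sigma}{\pi+\sigma}\sin(\tfrac{\pi+\sigma}{\sigma}a(s))+\frac{\sigma}{\pi-\sigma}\sin(\tfrac{\pi-\sigma}{\sigma}a(s))\big)$, $y(s)=\frac k2\big(\frac{\sigma}{\pi+\sigma}\cos(\tfrac{\pi+\sigma}{\sigma}a(s))+\frac{\sigma}{\pi-\sigma}\cos(\tfrac{\pi-\sigma}{\sigma}a(s))\big)+\frac{\pi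 x_0}{\sigma\tan\sigma}$; it is admissible, arc-length parametrized, with curvature $H(s)=\frac{\pi}{\sigma\sqrt{k^2-(s-L)^2}}$. *)

theory Defs
  imports "HOL-Analysis.Analysis"
begin

definition perp :: "real \<times> real \<Rightarrow> real \<times> real" where
  "perp v = (snd v, - fst v)"

definition Ds :: "real \<Rightarrow> (real \<Rightarrow> 'a::real_normed_vector) \<Rightarrow> real \<Rightarrow> 'a" where
  "Ds L f s = vector_derivative f (at s within {0..2*L})"

definition smooth_on_ivl :: "real set \<Rightarrow> (real \<Rightarrow> 'a::real_normed_vector) \<Rightarrow> bool" where
  "smooth_on_ivl S f \<longleftrightarrow> (\<exists>Df. Df 0 = f \<and>
     (\<forall>n. \<forall>x\<in>S. (Df n has_vector_derivative Df (Suc n) x) (at x within S)))"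

definition smooth_on_rect ::
  "real set \<Rightarrow> real set \<Rightarrow> (real \<Rightarrow> real \<Rightarrow> 'a::real_normed_vector) \<Rightarrow> bool" where
  "smooth_on_rect S T V \<longleftrightarrow> (\<exists>D. D 0 0 = V \<and>
     (\<forall>i j. continuous_on (S \<times> T) (\<lambda>(s,t). D i j s t) \<and>
        (\<forall>s\<in>S. \<forall>t\<in>T.
           ((\<lambda>s. D i j s t) has_vector_derivative D (Suc i) j s t) (at s within S) \<and>
           ((\<lambda>t. D i j s t) has_vector_derivative D i (Suc j) s t) (at t within T))))"

definition curvature :: "real \<Rightarrow> (real \<Rightarrow> real \<times> real) \<Rightarrow> real \<Rightarrow> real" where
  "curvature L c s = inner (Ds L c s) (perp (Ds L (Ds L c) s)) / norm (Ds L c s) ^ 3"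

definition normal :: "real \<Rightarrow> (real \<Rightarrow> real \<times> real) \<Rightarrow> real \<Rightarrow> real \<times> real" where
  "normal L c s = perp (Ds L c s) /\<^sub>R norm (Ds L c s)"

definition admissible :: "real \<Rightarrow> real \<Rightarrow> (real \<Rightarrow> real \<times> real) \<Rightarrow> bool" where
  "admissible x0 L c \<longleftrightarrow>
     smooth_on_ivl {0..2*L} c \<and>
     (\<forall>s\<in>{0..2*L}. Ds L c s \<noteq> 0) \<and>
     (\<forall>s\<in>{0..2*L}. curvature L c s > 0) \<and>
     inj_on c {0..2*L} \<and>
     c 0 = (x0, 0) \<and> c (2*L) = (- x0, 0) \<and>
     (\<forall>s\<in>{0<..<2*L}. snd (c s) > 0)"

definition area :: "real \<Rightarrow> (real \<Rightarrow> real \<times> real) \<Rightarrow> real" where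
  "area L c = 1/2 * integral {0..2*L}
      (\<lambda>s. fst (c s) * snd (Ds L c s) - fst (Ds L c s) * snd (c s))"

definition Fenergy :: "real \<Rightarrow> (real \<Rightarrow> real \<times> real) \<Rightarrow> real" where
  "Fenergy L c = integral {0..2*L} (\<lambda>s. norm (Ds L c s) / curvature L c s)"

definition gamma_sig :: "real \<Rightarrow> real \<Rightarrow> real" where
  "gamma_sig x0 L = pi * sqrt (x0 / (L + x0))"

definition gamma_k :: "real \<Rightarrow> real \<Rightarrow> real" where
  "gamma_k x0 L = L / sin (gamma_sig x0 L)"

definition gamma_curve :: "real \<Rightarrow> real \<Rightarrow> real \<Rightarrow> real \<times> real" where
  "gamma_curve x0 L s =
    (let \<sigma> = gamma_sig x0 L; k = gamma_k x0 L; a = arcsin ((s - L) / k) in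
     (- k/2 * (\<sigma>/(pi+\<sigma>) * sin ((pi+\<sigma>)/\<sigma> * a) + \<sigma>/(pi-\<sigma>) * sin ((pi-\<sigma>)/\<sigma> * a)),
        k/2 * (\<sigma>/(pi+\<sigma>) * cos ((pi+\<sigma>)/\<sigma> * a) + \<sigma>/(pi-\<sigma>) * cos ((pi-\<sigma>)/\<sigma> * a))
        + pi * x0 / (\<sigma> * tan \<sigma>)))"

definition lam :: "real \<Rightarrow> real \<Rightarrow> real" where
  "lam x0 L = 2 * L / (L + x0)"

end

theory Submission
  imports Defs
begin

text \<open>Along the variation, \<open>F - \<lambda> A\<close> is the integral of a density in the jet of \<open>V\<close>
  (the integrand \<open>|c'| / H\<close> of \<open>F\<close> equals \<open>|c'|\<^sup>4 / (c' \<times> c'')\<close>), so it can be differentiated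
  twice under the integral sign. At \<open>t = 0\<close> the second derivative of the density is expanded in
  the Frenet frame of \<open>\<gamma>\<close>, where \<open>T' = -H N\<close> and \<open>N' = H T\<close>. Because \<open>H\<close> satisfies the
  Euler--Lagrange equation \<open>H'' = 3 H'\<^sup>2 / H + (2 - \<lambda>) H\<^sup>3 / 2\<close>, it differs from the quadratic form
  in \<open>\<phi>\<close> by an exact derivative, whose boundary values reduce to \<open>\<psi>' / H\<^sup>2\<close> since the end points
  stay fixed. Finally, all curves lie in the upper half plane, so the vertical component of the
  tangent at \<open>s = 0\<close> is minimal at \<open>t = 0\<close> (maximal at \<open>s = 2L\<close>); its second \<open>t\<close>-derivative is
  \<open>-\<psi>'\<close>, which gives \<open>\<psi>'(0) \<le> 0 \<le> \<psi>'(2L)\<close>.\<close>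

section \<open>Planar vectors and one-variable calculus\<close>

definition cross2 :: "real \<times> real \<Rightarrow> real \<times> real \<Rightarrow> real" where
  "cross2 a b = fst a * snd b - snd a * fst b"

lemma inner_prod_eq: "inner a b = fst a * fst b + snd a * snd (b :: real \<times> real)"
  by (simp add: inner_prod_def)

lemma inner_perp: "inner a (perp b) = cross2 a b"
  by (simp add: inner_prod_eq perp_def cross2_def)

lemma has_real_derivative_fst:
  "(f has_vector_derivative f') F \<Longrightarrow> ((\<lambda>x. fst (f x)) has_real_derivative fst f') F"
  unfolding has_vector_derivative_def has_field_derivative_def
  by (drule has_derivative_fst) (simp add: mult_commute_abs)

lemma has_real_derivative_snd:
  "(f has_vector_derivative f') F \<Longrightarrow> ((\<lambda>x. snd (f x)) has_real_derivative snd f') F"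
  unfolding has_vector_derivative_def has_field_derivative_def
  by (drule has_derivative_snd) (simp add: mult_commute_abs)

lemma has_real_derivative_inner:
  fixes a b :: "real \<Rightarrow> 'a::real_inner"
  assumes "(a has_vector_derivative a') (at x within S)" "(b has_vector_derivative b') (at x within S)"
  shows "((\<lambda>x. inner (a x) (b x)) has_real_derivative inner a' (b x) + inner (a x) b') (at x within S)"
proof -
  have "(\<lambda>h. inner (a x) (h *\<^sub>R b') + inner (h *\<^sub>R a') (b x)) = (*) (inner a' (b x) + inner (a x) b')"
    by (simp add: fun_eq_iff algebra_simps)
  with has_derivative_inner[OF assms[unfolded has_vector_derivative_def]] show ?thesis
    by (simp add: has_field_derivative_def)
qed

lemma has_real_derivative_cross2:
  assumes "(a has_vector_derivative a') (at x within S)" "(b has_vector_derivative b') (at x within S)"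
  shows "((\<lambda>x. cross2 (a x) (b x)) has_real_derivative cross2 a' (b x) + cross2 (a x) b') (at x within S)"
proof -
  note a = has_real_derivative_fst[OF assms(1)] has_real_derivative_snd[OF assms(1)]
    and b = has_real_derivative_fst[OF assms(2)] has_real_derivative_snd[OF assms(2)]
  show ?thesis
    unfolding cross2_def
    by (rule DERIV_cong[OF DERIV_diff[OF DERIV_mult[OF a(1) b(2)] DERIV_mult[OF a(2) b(1)]]])
       (simp add: algebra_simps)
qed

lemma vector_derivative_within_Icc_eqI:
  fixes g :: "real \<Rightarrow> 'a::euclidean_space"
  assumes "a < b" "x \<in> {a..b}" "(g has_vector_derivative g') (at x within {a..b})"
    and "\<And>y. y \<in> {a..b} \<Longrightarrow> f y = g y"
  shows "vector_derivative f (at x within {a..b}) = g'"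
proof -
  have "(f has_vector_derivative g') (at x within {a..b})"
    using assms(2,4,3) by (rule has_vector_derivative_transform)
  then show ?thesis
    by (rule vector_derivative_within_closed_interval[OF assms(1,2)])
qed

lemma has_vector_derivative_Icc_unique:
  fixes f g :: "real \<Rightarrow> 'a::euclidean_space"
  assumes "a < b" "x \<in> {a..b}"
    and "(f has_vector_derivative f') (at x within {a..b})"
    and "(g has_vector_derivative g') (at x within {a..b})"
    and "\<And>y. y \<in> {a..b} \<Longrightarrow> f y = g y"
  shows "f' = g'"
  using vector_derivative_within_Icc_eqI[OF assms(1,2,3), of f]
    vector_derivative_within_Icc_eqI[OF assms(1,2,4,5)] by simp

lemma has_real_derivative_nonneg_at_left_end:
  fixes h :: "real \<Rightarrow> real"
  assumes "a < b" and "(h has_real_derivative d) (at a within {a..b})"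
    and "h a = 0" and "\<And>s. s \<in> {a<..<b} \<Longrightarrow> 0 < h s"
  shows "0 \<le> d"
proof (rule tendsto_lowerbound)
  show "((\<lambda>y. (h y - h a) / (y - a)) \<longlongrightarrow> d) (at_right a)"
    using assms(2) by (simp add: has_field_derivative_iff at_within_Icc_at_right[OF assms(1)])
  show "\<forall>\<^sub>F y in at_right a. 0 \<le> (h y - h a) / (y - a)"
    unfolding eventually_at_right_field using assms(1,3,4) by (auto intro!: exI[of _ b] less_imp_le)
qed simp

lemma has_real_derivative_nonpos_at_right_end:
  fixes h :: "real \<Rightarrow> real"
  assumes "a < b" and "(h has_real_derivative d) (at b within {a..b})"
    and "h b = 0" and "\<And>s. s \<in> {a<..<b} \<Longrightarrow> 0 < h s"
  shows "d \<le> 0"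
proof (rule tendsto_upperbound)
  show "((\<lambda>y. (h y - h b) / (y - b)) \<longlongrightarrow> d) (at_left b)"
    using assms(2) by (simp add: has_field_derivative_iff at_within_Icc_at_left[OF assms(1)])
  show "\<forall>\<^sub>F y in at_left b. (h y - h b) / (y - b) \<le> 0"
    unfolding eventually_at_left_field using assms(1,3,4)
    by (auto intro!: exI[of _ a] less_imp_le divide_pos_neg)
qed simp

lemma interior_minimum_second_derivative:
  fixes f f' :: "real \<Rightarrow> real"
  assumes T: "0 < T" and min: "\<And>t. t \<in> {-T..T} \<Longrightarrow> f 0 \<le> f t"
    and f': "\<And>t. t \<in> {-T..T} \<Longrightarrow> (f has_real_derivative f' t) (at t within {-T..T})"
    and f'': "(f' has_real_derivative c) (at 0 within {-T..T})"
  shows "f' 0 = 0" and "0 \<le> c"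
proof -
  have f'_at: "(f has_real_derivative f' t) (at t)" if "t \<in> {-T<..<T}" for t
    using f'[of t] that by (simp add: at_within_Icc_at)
  show f'0: "f' 0 = 0"
    by (rule DERIV_local_min[OF f'_at T]) (use T min in \<open>auto simp: abs_less_iff\<close>)
  show "0 \<le> c"
  proof (rule ccontr)
    assume "\<not> 0 \<le> c"
    have "((\<lambda>y. f' y / y) \<longlongrightarrow> c) (at_right 0)"
      using f'' f'0 T
      by (auto simp: has_field_derivative_iff at_within_Icc_at intro: tendsto_mono[OF at_le])
    then have "\<forall>\<^sub>F y in at_right 0. f' y / y < 0"
      using \<open>\<not> 0 \<le> c\<close> by (auto intro: order_tendstoD(2))
    then obtain e where e: "0 < e" "\<And>y. 0 < y \<Longrightarrow> y < e \<Longrightarrow> f' y < 0"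
      unfolding eventually_at_right_field by (auto simp: divide_less_0_iff)
    define b where "b = min e T"
    have "f b < f 0"
    proof (rule DERIV_neg_imp_decreasing_open[of 0 b f])
      fix x assume "0 < x" "x < b"
      then show "\<exists>y. (f has_real_derivative y) (at x) \<and> y < 0"
        using f'_at[of x] e(2)[of x] T by (auto simp: b_def)
    next
      show "continuous_on {0..b} f"
        by (rule DERIV_continuous_on[OF f', THEN continuous_on_subset]) (auto simp: b_def)
    qed (use e T in \<open>simp add: b_def\<close>)
    with min[of b] e T show False by (simp add: b_def)
  qed
qed

lemma has_real_derivative_integral_parametric:
  fixes f f' :: "real \<Rightarrow> real \<Rightarrow> real"
  assumes f': "\<And>s t. s \<in> {a..b} \<Longrightarrow> t \<in> U \<Longrightarrow> ((\<lambda>t. f s t) has_real_derivative f' s t) (at t within U)"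
    and f: "\<And>t. t \<in> U \<Longrightarrow> continuous_on {a..b} (\<lambda>s. f s t)"
    and cont: "continuous_on ({a..b} \<times> U) (\<lambda>(s, t). f' s t)"
    and "t \<in> U" "convex U"
  shows "((\<lambda>t. integral {a..b} (\<lambda>s. f s t)) has_real_derivative integral {a..b} (\<lambda>s. f' s t))
           (at t within U)"
proof -
  have "((\<lambda>t. integral (cbox a b) (\<lambda>s. f s t)) has_real_derivative integral (cbox a b) (\<lambda>s. f' s t))
          (at t within U)"
    by (rule leibniz_rule_field_derivative[of U a b "\<lambda>t s. f s t" "\<lambda>t s. f' s t"])
       (use f' f continuous_on_swap_args[OF cont] assms(4,5) in
         \<open>auto simp: cbox_interval intro: integrable_continuous_interval\<close>)
  then show ?thesis by (simp add: cbox_interval)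
qed

section \<open>The energy \<open>F - \<lambda> A\<close> along a smooth family of curves\<close>

text \<open>A jet \<open>J\<close> records the partial derivatives \<open>J i j = \<partial>\<^sub>s\<^sup>i \<partial>\<^sub>t\<^sup>j V\<close> of a family of curves
  \<open>V s t\<close> at one point.\<close>
type_synonym jet = "nat \<Rightarrow> nat \<Rightarrow> real \<times> real"

definition energy_density :: "real \<Rightarrow> jet \<Rightarrow> real" where
  "energy_density lm J =
     (inner (J 1 0) (J 1 0))\<^sup>2 / cross2 (J 1 0) (J 2 0) - lm / 2 * cross2 (J 0 0) (J 1 0)"

definition energy_density_dt :: "real \<Rightarrow> jet \<Rightarrow> real" where
  "energy_density_dt lm J =
     (let P = inner (J 1 0) (J 1 0); Q = cross2 (J 1 0) (J 2 0);
          P1 = 2 * inner (J 1 0) (J 1 1); Q1 = cross2 (J 1 1) (J 2 0) + cross2 (J 1 0) (J 2 1)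
      in 2 * P * P1 / Q - P\<^sup>2 * Q1 / Q\<^sup>2)
     - lm / 2 * (cross2 (J 0 1) (J 1 0) + cross2 (J 0 0) (J 1 1))"

definition energy_density_dtt :: "real \<Rightarrow> jet \<Rightarrow> real" where
  "energy_density_dtt lm J =
     (let P = inner (J 1 0) (J 1 0); Q = cross2 (J 1 0) (J 2 0);
          P1 = 2 * inner (J 1 0) (J 1 1); Q1 = cross2 (J 1 1) (J 2 0) + cross2 (J 1 0) (J 2 1);
          P2 = 2 * inner (J 1 1) (J 1 1) + 2 * inner (J 1 0) (J 1 2);
          Q2 = cross2 (J 1 2) (J 2 0) + 2 * cross2 (J 1 1) (J 2 1) + cross2 (J 1 0) (J 2 2)
      in 2 * P1\<^sup>2 / Q + 2 * P * P2 / Q - 4 * P * P1 * Q1 / Q\<^sup>2 - P\<^sup>2 * Q2 / Q\<^sup>2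
         + 2 * P\<^sup>2 * Q1\<^sup>2 / Q ^ 3)
     - lm / 2 * (cross2 (J 0 2) (J 1 0) + 2 * cross2 (J 0 1) (J 1 1) + cross2 (J 0 0) (J 1 2))"

lemma energy_density_has_derivative:
  fixes J :: "real \<Rightarrow> jet"
  assumes J': "\<And>i j. ((\<lambda>t. J t i j) has_vector_derivative J x i (Suc j)) (at x within S)"
    and Q: "cross2 (J x 1 0) (J x 2 0) \<noteq> 0"
  shows "((\<lambda>t. energy_density lm (J t)) has_real_derivative energy_density_dt lm (J x)) (at x within S)"
    and "((\<lambda>t. energy_density_dt lm (J t)) has_real_derivative energy_density_dtt lm (J x))
           (at x within S)"
  unfolding energy_density_def energy_density_dt_def energy_density_dtt_def Let_def
  by (rule DERIV_cong,
      (rule derivative_eq_intros has_real_derivative_inner has_real_derivative_cross2 J' refl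
        | (use Q in simp; fail))+,
      use Q in \<open>simp add: numeral_2_eq_2 inner_commute field_simps power2_eq_square power3_eq_cube\<close>)+

lemma continuous_on_energy_densities:
  fixes J :: "'a::topological_space \<Rightarrow> jet"
  assumes J: "\<And>i j. continuous_on X (\<lambda>p. J p i j)"
    and Q: "\<And>p. p \<in> X \<Longrightarrow> cross2 (J p 1 0) (J p 2 0) \<noteq> 0"
  shows "continuous_on X (\<lambda>p. energy_density lm (J p))"
    and "continuous_on X (\<lambda>p. energy_density_dt lm (J p))"
    and "continuous_on X (\<lambda>p. energy_density_dtt lm (J p))"
  using Q
  unfolding energy_density_def energy_density_dt_def energy_density_dtt_def Let_def cross2_def
    inner_prod_eq
  by (auto intro!: continuous_intros J)

lemma norm_div_curvature: "norm a / (cross2 a b / norm a ^ 3) = (inner a a)\<^sup>2 / cross2 a b"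
proof (cases "a = 0")
  case False
  have "(inner a a)\<^sup>2 = norm a * norm a ^ 3"
    by (simp add: power2_norm_eq_inner[symmetric] power_numeral_reduce)
  with False show ?thesis by (simp add: field_simps)
qed simp

locale smooth_variation =
  fixes L T :: real and D :: "nat \<Rightarrow> nat \<Rightarrow> real \<Rightarrow> real \<Rightarrow> real \<times> real"
  assumes length_pos: "0 < L" and T_pos: "0 < T"
    and D_cont: "\<And>i j. continuous_on ({0..2*L} \<times> {-T..T}) (\<lambda>(s, t). D i j s t)"
    and D_ds: "\<And>i j s t. s \<in> {0..2*L} \<Longrightarrow> t \<in> {-T..T} \<Longrightarrow>
      ((\<lambda>s. D i j s t) has_vector_derivative D (Suc i) j s t) (at s within {0..2*L})"
    and D_dt: "\<And>i j s t. s \<in> {0..2*L} \<Longrightarrow> t \<in> {-T..T} \<Longrightarrow>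
      ((\<lambda>t. D i j s t) has_vector_derivative D i (Suc j) s t) (at t within {-T..T})"
    and curvature_pos: "\<And>s t. s \<in> {0..2*L} \<Longrightarrow> t \<in> {-T..T} \<Longrightarrow>
      0 < curvature L (\<lambda>s. D 0 0 s t) s"
begin

abbreviation jet :: "real \<Rightarrow> real \<Rightarrow> jet" where
  "jet s t \<equiv> \<lambda>i j. D i j s t"

lemma zero_in_time_interval: "0 \<in> {-T..T}"
  using T_pos by simp

lemma Ds_D:
  assumes "s \<in> {0..2*L}" "t \<in> {-T..T}"
  shows "Ds L (\<lambda>s. D i j s t) s = D (Suc i) j s t"
  unfolding Ds_def using length_pos assms D_ds by (intro vector_derivative_within_Icc_eqI) auto

lemma Ds_Ds_D:
  assumes "s \<in> {0..2*L}" "t \<in> {-T..T}"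
  shows "Ds L (Ds L (\<lambda>s. D 0 0 s t)) s = D 2 0 s t"
  unfolding Ds_def[of L "Ds L _"]
  using length_pos assms D_ds[of _ t 1 0] Ds_D[OF _ assms(2)]
  by (intro vector_derivative_within_Icc_eqI[where g="\<lambda>s. D 1 0 s t"]) (auto simp: numeral_2_eq_2)

lemma cross2_pos:
  assumes "s \<in> {0..2*L}" "t \<in> {-T..T}"
  shows "0 < cross2 (D 1 0 s t) (D 2 0 s t)"
proof -
  have "0 < cross2 (D 1 0 s t) (D 2 0 s t) / norm (D 1 0 s t) ^ 3"
    using curvature_pos[OF assms]
    unfolding curvature_def Ds_D[OF assms] Ds_Ds_D[OF assms] inner_perp by simp
  then show ?thesis by (simp add: zero_less_divide_iff)
qed

lemma continuous_on_D_slice: "t \<in> {-T..T} \<Longrightarrow> continuous_on {0..2*L} (\<lambda>s. D i j s t)"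
  by (rule continuous_on_compose2[OF D_cont, of _ "\<lambda>s. (s, t)", simplified])
     (auto intro!: continuous_intros)

lemma energy_eq_integral:
  assumes t: "t \<in> {-T..T}"
  shows "Fenergy L (\<lambda>s. D 0 0 s t) - lm * area L (\<lambda>s. D 0 0 s t)
           = integral {0..2*L} (\<lambda>s. energy_density lm (jet s t))"
proof -
  have F: "Fenergy L (\<lambda>s. D 0 0 s t)
             = integral {0..2*L} (\<lambda>s. (inner (D 1 0 s t) (D 1 0 s t))\<^sup>2 / cross2 (D 1 0 s t) (D 2 0 s t))"
    unfolding Fenergy_def curvature_def inner_perp
    using Ds_D[OF _ t] Ds_Ds_D[OF _ t] by (intro integral_cong) (simp only: norm_div_curvature One_nat_def)
  have A: "area L (\<lambda>s. D 0 0 s t) = 1/2 * integral {0..2*L} (\<lambda>s. cross2 (D 0 0 s t) (D 1 0 s t))"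
    unfolding area_def using Ds_D[OF _ t]
    by (intro arg_cong[where f="(*) (1/2)"] integral_cong) (simp add: cross2_def mult.commute)
  have iF: "(\<lambda>s. (inner (D 1 0 s t) (D 1 0 s t))\<^sup>2 / cross2 (D 1 0 s t) (D 2 0 s t)) integrable_on {0..2*L}"
    using continuous_on_D_slice[OF t] cross2_pos[OF _ t, THEN less_imp_neq, THEN not_sym]
    unfolding cross2_def inner_prod_eq
    by (intro integrable_continuous_interval) (auto intro!: continuous_intros)
  have iA: "(\<lambda>s. cross2 (D 0 0 s t) (D 1 0 s t)) integrable_on {0..2*L}"
    using continuous_on_D_slice[OF t] unfolding cross2_def
    by (intro integrable_continuous_interval) (auto intro!: continuous_intros)
  show ?thesis
    unfolding F A energy_density_def
    using integral_diff[OF iF integrable_on_cmult_left[OF iA, of "lm / 2"]]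
    by (simp add: integral_mult_left)
qed

lemma jet_energy_density_has_derivative:
  assumes "s \<in> {0..2*L}" "t \<in> {-T..T}"
  shows "((\<lambda>t. energy_density lm (jet s t)) has_real_derivative energy_density_dt lm (jet s t))
           (at t within {-T..T})"
    and "((\<lambda>t. energy_density_dt lm (jet s t)) has_real_derivative energy_density_dtt lm (jet s t))
           (at t within {-T..T})"
  using cross2_pos[OF assms]
  by (intro energy_density_has_derivative D_dt[OF assms]; simp)+

lemma continuous_on_jet_energy_densities:
  shows "t \<in> {-T..T} \<Longrightarrow> continuous_on {0..2*L} (\<lambda>s. energy_density lm (jet s t))"
    and "t \<in> {-T..T} \<Longrightarrow> continuous_on {0..2*L} (\<lambda>s. energy_density_dt lm (jet s t))"
    and "t \<in> {-T..T} \<Longrightarrow> continuous_on {0..2*L} (\<lambda>s. energy_density_dtt lm (jet s t))"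
    and "continuous_on ({0..2*L} \<times> {-T..T}) (\<lambda>(s, t). energy_density_dt lm (jet s t))"
    and "continuous_on ({0..2*L} \<times> {-T..T}) (\<lambda>(s, t). energy_density_dtt lm (jet s t))"
proof -
  have cont: "continuous_on ({0..2*L} \<times> {-T..T}) (\<lambda>p. D i j (fst p) (snd p))" for i j
    using D_cont[of i j] by (simp add: split_beta)
  have Q: "cross2 (D 1 0 (fst p) (snd p)) (D 2 0 (fst p) (snd p)) \<noteq> 0"
    if "p \<in> {0..2*L} \<times> {-T..T}" for p
    using cross2_pos[of "fst p" "snd p"] that by (auto simp: mem_Times_iff)
  show "continuous_on ({0..2*L} \<times> {-T..T}) (\<lambda>(s, t). energy_density_dt lm (jet s t))"
    and "continuous_on ({0..2*L} \<times> {-T..T}) (\<lambda>(s, t). energy_density_dtt lm (jet s t))"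
    using continuous_on_energy_densities(2,3)[where J="\<lambda>p. jet (fst p) (snd p)", OF cont Q]
    by (simp_all add: split_beta)
  assume t: "t \<in> {-T..T}"
  have Qt: "cross2 (D 1 0 s t) (D 2 0 s t) \<noteq> 0" if "s \<in> {0..2*L}" for s
    using cross2_pos[OF that t] by simp
  show "continuous_on {0..2*L} (\<lambda>s. energy_density lm (jet s t))"
    and "continuous_on {0..2*L} (\<lambda>s. energy_density_dt lm (jet s t))"
    and "continuous_on {0..2*L} (\<lambda>s. energy_density_dtt lm (jet s t))"
    using continuous_on_energy_densities[where J="\<lambda>s. jet s t", OF continuous_on_D_slice[OF t] Qt]
    by simp_all
qed

lemma energy_has_derivative:
  assumes t: "t \<in> {-T<..<T}"
  shows "((\<lambda>t. Fenergy L (\<lambda>s. D 0 0 s t) - lm * area L (\<lambda>s. D 0 0 s t)) has_real_derivative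
           integral {0..2*L} (\<lambda>s. energy_density_dt lm (jet s t))) (at t)"
proof -
  have "((\<lambda>t. integral {0..2*L} (\<lambda>s. energy_density lm (jet s t))) has_real_derivative
          integral {0..2*L} (\<lambda>s. energy_density_dt lm (jet s t))) (at t within {-T..T})"
    using t by (intro has_real_derivative_integral_parametric jet_energy_density_has_derivative
        continuous_on_jet_energy_densities) auto
  then have "((\<lambda>t. integral {0..2*L} (\<lambda>s. energy_density lm (jet s t))) has_real_derivative
               integral {0..2*L} (\<lambda>s. energy_density_dt lm (jet s t))) (at t)"
    using t by (simp add: at_within_Icc_at)
  then show ?thesis
    by (rule has_field_derivative_transform_within_open[OF _ open_greaterThanLessThan t])
       (simp add: energy_eq_integral)
qed

lemma energy_dt_has_derivative:
  "((\<lambda>t. integral {0..2*L} (\<lambda>s. energy_density_dt lm (jet s t))) has_real_derivative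
     integral {0..2*L} (\<lambda>s. energy_density_dtt lm (jet s 0))) (at 0)"
proof -
  have "((\<lambda>t. integral {0..2*L} (\<lambda>s. energy_density_dt lm (jet s t))) has_real_derivative
          integral {0..2*L} (\<lambda>s. energy_density_dtt lm (jet s 0))) (at 0 within {-T..T})"
    using T_pos by (intro has_real_derivative_integral_parametric jet_energy_density_has_derivative
        continuous_on_jet_energy_densities) auto
  then show ?thesis using T_pos by (simp add: at_within_Icc_at)
qed

end

section \<open>The explicit curve \<open>\<gamma>(x\<^sub>0, L)\<close>\<close>

locale gamma_params =
  fixes x0 L :: real
  assumes x0_pos: "0 < 3 * x0" and x0_less: "3 * x0 < L"
begin

abbreviation \<sigma> :: real where "\<sigma> \<equiv> gamma_sig x0 L"
abbreviation k :: real where "k \<equiv> gamma_k x0 L"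

definition phase :: "real \<Rightarrow> real" where
  "phase s = arcsin ((s - L) / k)"

definition theta :: "real \<Rightarrow> real" where
  "theta s = pi / \<sigma> * phase s"

definition tangent :: "real \<Rightarrow> real \<times> real" where
  "tangent s = (- cos (theta s), - sin (theta s))"

definition unit_normal :: "real \<Rightarrow> real \<times> real" where
  "unit_normal s = (- sin (theta s), cos (theta s))"

definition radicand :: "real \<Rightarrow> real" where
  "radicand s = k\<^sup>2 - (s - L)\<^sup>2"

definition curv :: "real \<Rightarrow> real" where
  "curv s = pi / (\<sigma> * sqrt (radicand s))"

definition curv' :: "real \<Rightarrow> real" where
  "curv' s = curv s * (s - L) / radicand s"

lemma L_pos: "0 < L"
  using x0_pos x0_less by linarith

lemma sig_bounds: "0 < \<sigma>" "\<sigma> < pi / 2"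
proof -
  have "0 < x0 / (L + x0)" "x0 / (L + x0) < 1/4"
    using x0_pos x0_less by (simp_all add: field_simps)
  moreover have "sqrt (1/4 :: real) = 1/2"
    by (simp add: real_sqrt_divide)
  ultimately have "0 < sqrt (x0 / (L + x0))" "sqrt (x0 / (L + x0)) < 1/2"
    by (metis real_sqrt_gt_zero, metis real_sqrt_less_iff)
  then show "0 < \<sigma>" "\<sigma> < pi / 2"
    by (simp_all add: gamma_sig_def)
qed

lemma sin_sig_bounds: "0 < sin \<sigma>" "sin \<sigma> < 1"
proof -
  show "0 < sin \<sigma>" using sig_bounds by (intro sin_gt_zero) auto
  have "sin \<sigma> < sin (pi / 2)" using sig_bounds by (intro sin_monotone_2pi) auto
  then show "sin \<sigma> < 1" by simp
qed

lemma k_gt_L: "L < k"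
  using sin_sig_bounds L_pos by (simp add: gamma_k_def field_simps)

lemma in_domain: "s \<in> {0..2*L} \<Longrightarrow> \<bar>s - L\<bar> < k"
  using k_gt_L by auto

lemma radicand_pos: "\<bar>s - L\<bar> < k \<Longrightarrow> 0 < radicand s"
  using power_strict_mono[of "\<bar>s - L\<bar>" k 2] by (simp add: radicand_def)

lemma phase_arg_bounds: "\<bar>s - L\<bar> < k \<Longrightarrow> -1 < (s - L) / k \<and> (s - L) / k < 1"
  using k_gt_L L_pos by (auto simp: field_simps abs_less_iff)

lemma sqrt_radicand: "sqrt (radicand s) = k * sqrt (1 - ((s - L) / k)\<^sup>2)"
proof -
  have "radicand s = k\<^sup>2 * (1 - ((s - L) / k)\<^sup>2)"
    using k_gt_L L_pos by (simp add: radicand_def field_simps)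
  then show ?thesis
    using k_gt_L L_pos by (simp add: real_sqrt_mult)
qed

lemma phase_has_derivative:
  assumes s: "\<bar>s - L\<bar> < k"
  shows "(phase has_real_derivative 1 / sqrt (radicand s)) (at s)"
proof -
  have "((\<lambda>s. arcsin ((s - L) / k)) has_real_derivative
          inverse (sqrt (1 - ((s - L) / k)\<^sup>2)) * (1 / k)) (at s)"
    using phase_arg_bounds[OF s] k_gt_L L_pos
    by (intro DERIV_chain2[OF DERIV_arcsin]) (auto intro!: derivative_eq_intros)
  then show ?thesis
    using k_gt_L L_pos by (simp add: phase_def[abs_def] sqrt_radicand field_simps)
qed

lemma cos_phase: "\<bar>s - L\<bar> < k \<Longrightarrow> cos (phase s) = sqrt (radicand s) / k"
  using phase_arg_bounds[of s] k_gt_L L_pos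
  by (simp add: phase_def cos_arcsin sqrt_radicand)

lemma gamma_curve_eq:
  "gamma_curve x0 L s =
     (- k/2 * (\<sigma>/(pi+\<sigma>) * sin ((pi+\<sigma>)/\<sigma> * phase s) + \<sigma>/(pi-\<sigma>) * sin ((pi-\<sigma>)/\<sigma> * phase s)),
      k/2 * (\<sigma>/(pi+\<sigma>) * cos ((pi+\<sigma>)/\<sigma> * phase s) + \<sigma>/(pi-\<sigma>) * cos ((pi-\<sigma>)/\<sigma> * phase s))
        + pi * x0 / (\<sigma> * tan \<sigma>))"
  by (simp add: gamma_curve_def phase_def Let_def)

text \<open>With \<open>a = phase s\<close>, the two frequencies \<open>(pi \<plusminus> \<sigma>)/\<sigma> * a\<close> are \<open>theta s \<plusminus> a\<close>, and the
  sum-to-product formulas turn the derivative into \<open>k * cos a * a' = 1\<close> times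
  \<open>(- cos (theta s), - sin (theta s))\<close>.\<close>
lemma gamma_curve_has_derivative:
  assumes s: "\<bar>s - L\<bar> < k"
  shows "(gamma_curve x0 L has_vector_derivative tangent s) (at s)"
proof -
  define A where "A = theta s"
  define b where "b = phase s"
  have sig: "0 < \<sigma>" "\<sigma> < pi / 2" by (rule sig_bounds)+
  have k: "0 < k" using k_gt_L L_pos by linarith
  have sum: "(pi + \<sigma>) / \<sigma> * b = A + b" and diff: "(pi - \<sigma>) / \<sigma> * b = A - b"
    using sig by (simp_all add: A_def b_def theta_def field_simps)
  have w: "0 < sqrt (radicand s)" using radicand_pos[OF s] by simp
  have cb: "cos b = sqrt (radicand s) / k" unfolding b_def by (rule cos_phase[OF s])
  have "pi + \<sigma> \<noteq> 0" "pi - \<sigma> \<noteq> 0" "\<sigma> \<noteq> 0" using sig pi_gt_zero by linarith+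
  then have c1: "(pi + \<sigma>) / \<sigma> * (\<sigma> / (pi + \<sigma>)) = 1" and c2: "(pi - \<sigma>) / \<sigma> * (\<sigma> / (pi - \<sigma>)) = 1"
    by simp_all
  have "cos (A + b) + cos (A - b) = 2 * cos A * (sqrt (radicand s) / k)"
    and "sin (A + b) + sin (A - b) = 2 * sin A * (sqrt (radicand s) / k)"
    by (simp_all add: cos_add cos_diff sin_add sin_diff cb[symmetric])
  note key = this
  note da = phase_has_derivative[OF s]
  have d1: "((\<lambda>s. - k/2 * (\<sigma>/(pi+\<sigma>) * sin ((pi+\<sigma>)/\<sigma> * phase s) + \<sigma>/(pi-\<sigma>) * sin ((pi-\<sigma>)/\<sigma> * phase s)))
     has_real_derivative - cos A) (at s)"
    by (rule DERIV_cong, (rule derivative_eq_intros da refl)+,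
        unfold b_def[symmetric] sum diff,
        simp only: mult_zero_left add_0_left add_0 mult.assoc c1 c2 mult_1_right)
       (use key w k in \<open>simp add: field_simps\<close>)
  have d2: "((\<lambda>s. k/2 * (\<sigma>/(pi+\<sigma>) * cos ((pi+\<sigma>)/\<sigma> * phase s) + \<sigma>/(pi-\<sigma>) * cos ((pi-\<sigma>)/\<sigma> * phase s))
        + pi * x0 / (\<sigma> * tan \<sigma>)) has_real_derivative - sin A) (at s)"
    by (rule DERIV_cong, (rule derivative_eq_intros da refl)+,
        unfold b_def[symmetric] sum diff,
        simp only: mult_zero_left add_0_left add_0 mult.assoc c1 c2 mult_1_right)
       (use key w k in \<open>simp add: field_simps\<close>)
  show ?thesis
    unfolding gamma_curve_eq[abs_def] tangent_def A_def[symmetric]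
    using d1 d2 by (intro has_vector_derivative_Pair) (simp_all add: has_real_derivative_iff_has_vector_derivative)
qed

lemma curv_pos: "\<bar>s - L\<bar> < k \<Longrightarrow> 0 < curv s"
  using radicand_pos[of s] sig_bounds by (simp add: curv_def)

lemma theta_has_derivative: "\<bar>s - L\<bar> < k \<Longrightarrow> (theta has_real_derivative curv s) (at s)"
  using DERIV_cmult[OF phase_has_derivative, of s "pi / \<sigma>"]
  by (simp add: theta_def[abs_def] curv_def)

lemma tangent_has_derivative:
  assumes s: "\<bar>s - L\<bar> < k"
  shows "(tangent has_vector_derivative (- curv s) *\<^sub>R unit_normal s) (at s)"
proof -
  have "((\<lambda>s. (- cos (theta s), - sin (theta s))) has_vector_derivative
          (sin (theta s) * curv s, - (cos (theta s) * curv s))) (at s)"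
    by (rule has_vector_derivative_Pair, unfold has_real_derivative_iff_has_vector_derivative[symmetric])
       (rule derivative_eq_intros theta_has_derivative[OF s] refl | simp)+
  then show ?thesis by (simp add: tangent_def[abs_def] unit_normal_def mult.commute)
qed

lemma unit_normal_has_derivative:
  assumes s: "\<bar>s - L\<bar> < k"
  shows "(unit_normal has_vector_derivative curv s *\<^sub>R tangent s) (at s)"
proof -
  have "((\<lambda>s. (- sin (theta s), cos (theta s))) has_vector_derivative
          (- (cos (theta s) * curv s), - (sin (theta s) * curv s))) (at s)"
    by (rule has_vector_derivative_Pair, unfold has_real_derivative_iff_has_vector_derivative[symmetric])
       (rule derivative_eq_intros theta_has_derivative[OF s] refl | simp)+
  then show ?thesis by (simp add: tangent_def unit_normal_def[abs_def] mult.commute)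
qed

lemma radicand_has_derivative: "(radicand has_real_derivative - 2 * (s - L)) (at s)"
  unfolding radicand_def[abs_def] by (auto intro!: derivative_eq_intros)

lemma curv_has_derivative:
  assumes s: "\<bar>s - L\<bar> < k"
  shows "(curv has_real_derivative curv' s) (at s)"
proof -
  have w: "0 < radicand s" by (rule radicand_pos[OF s])
  have "((\<lambda>s. pi / (\<sigma> * sqrt (radicand s))) has_real_derivative
          - (pi * (\<sigma> * (inverse (sqrt (radicand s)) / 2 * (- 2 * (s - L))))) / (\<sigma> * sqrt (radicand s))\<^sup>2) (at s)"
    using w sig_bounds
    by (auto intro!: derivative_eq_intros radicand_has_derivative simp: power2_eq_square)
  moreover have "- (pi * (\<sigma> * (inverse (sqrt (radicand s)) / 2 * (- 2 * (s - L))))) / (\<sigma> * sqrt (radicand s))\<^sup>2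
                   = curv' s"
    using w sig_bounds by (simp add: curv_def curv'_def field_simps power2_eq_square)
  ultimately show ?thesis by (simp add: curv_def[abs_def])
qed

text \<open>The Euler--Lagrange equation of \<open>F - \<lambda> A\<close>, satisfied by the curvature of \<open>\<gamma>\<close>.\<close>
lemma curv'_has_derivative:
  assumes s: "\<bar>s - L\<bar> < k"
  shows "(curv' has_real_derivative 3 * (curv' s)\<^sup>2 / curv s + (2 - lam x0 L) * (curv s) ^ 3 / 2)
           (at s)"
proof -
  have w: "0 < radicand s" by (rule radicand_pos[OF s])
  have H: "0 < curv s" by (rule curv_pos[OF s])
  have "((\<lambda>s. curv s * (s - L) / radicand s) has_real_derivative
          ((curv' s * (s - L) + curv s * 1) * radicand s - curv s * (s - L) * (- 2 * (s - L)))
            / (radicand s * radicand s)) (at s)"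
    using w by (auto intro!: derivative_eq_intros curv_has_derivative[OF s] radicand_has_derivative)
  moreover have "((curv' s * (s - L) + curv s * 1) * radicand s - curv s * (s - L) * (- 2 * (s - L)))
                   / (radicand s * radicand s) = 3 * curv s * (s - L)\<^sup>2 / (radicand s)\<^sup>2 + curv s / radicand s"
    using w by (simp add: curv'_def field_simps power2_eq_square)
  ultimately have "(curv' has_real_derivative 3 * curv s * (s - L)\<^sup>2 / (radicand s)\<^sup>2 + curv s / radicand s)
                     (at s)"
    by (simp add: curv'_def[abs_def])
  moreover have "3 * curv s * (s - L)\<^sup>2 / (radicand s)\<^sup>2 = 3 * (curv' s)\<^sup>2 / curv s"
    using H w by (simp add: curv'_def field_simps power2_eq_square)
  moreover have "curv s / radicand s = (2 - lam x0 L) * (curv s) ^ 3 / 2"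
  proof -
    have "\<sigma>\<^sup>2 = pi\<^sup>2 * (x0 / (L + x0))"
      using x0_pos x0_less by (simp add: gamma_sig_def power_mult_distrib)
    then have "(2 - lam x0 L) / 2 = \<sigma>\<^sup>2 / pi\<^sup>2"
      using x0_pos x0_less by (simp add: lam_def field_simps)
    moreover have "(curv s)\<^sup>2 = pi\<^sup>2 / (\<sigma>\<^sup>2 * radicand s)"
      using w by (simp add: curv_def power_divide power_mult_distrib)
    moreover have "(2 - lam x0 L) * (curv s) ^ 3 / 2 = (2 - lam x0 L) / 2 * (curv s)\<^sup>2 * curv s"
      by (simp add: power3_eq_cube power2_eq_square)
    ultimately have "(2 - lam x0 L) * (curv s) ^ 3 / 2 = \<sigma>\<^sup>2 / pi\<^sup>2 * (pi\<^sup>2 / (\<sigma>\<^sup>2 * radicand s)) * curv s"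
      by simp
    then show ?thesis
      using w sig_bounds by (simp add: field_simps)
  qed
  ultimately show ?thesis by simp
qed

lemma theta_ends: "theta 0 = - pi" "theta (2*L) = pi"
proof -
  have "arcsin (sin \<sigma>) = \<sigma>" using sig_bounds by (intro arcsin_sin) auto
  moreover have "L / k = sin \<sigma>" using sin_sig_bounds L_pos by (simp add: gamma_k_def)
  ultimately have "phase 0 = - \<sigma>" "phase (2*L) = \<sigma>"
    by (simp_all add: phase_def arcsin_minus)
  then show "theta 0 = - pi" "theta (2*L) = pi"
    using sig_bounds by (simp_all add: theta_def)
qed

lemma frame_ends:
  "tangent 0 = (1, 0)" "tangent (2*L) = (1, 0)"
  "unit_normal 0 = (0, -1)" "unit_normal (2*L) = (0, -1)"
  by (simp_all add: tangent_def unit_normal_def theta_ends)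

lemma perp_tangent: "perp (tangent s) = unit_normal s"
  by (simp add: perp_def tangent_def unit_normal_def)

lemma tangent_unit: "(fst (tangent s))\<^sup>2 + (snd (tangent s))\<^sup>2 = 1"
  by (simp add: tangent_def)

lemma norm_tangent: "norm (tangent s) = 1"
  by (simp add: tangent_def norm_Pair)

lemma frame_orthonormal:
  "inner (tangent s) (tangent s) = 1" "inner (unit_normal s) (unit_normal s) = 1"
  "inner (tangent s) (unit_normal s) = 0" "inner (unit_normal s) (tangent s) = 0"
  by (simp_all add: tangent_def unit_normal_def inner_prod_eq power2_eq_square[symmetric])

lemma inner_frame_has_derivative:
  assumes s: "\<bar>s - L\<bar> < k" and a: "(a has_vector_derivative b) (at s within S)"
  shows "((\<lambda>s. inner (a s) (unit_normal s)) has_real_derivative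
           inner b (unit_normal s) + curv s * inner (a s) (tangent s)) (at s within S)"
    and "((\<lambda>s. inner (a s) (tangent s)) has_real_derivative
           inner b (tangent s) - curv s * inner (a s) (unit_normal s)) (at s within S)"
  using has_real_derivative_inner[OF a unit_normal_has_derivative[OF s, THEN has_vector_derivative_at_within]]
    has_real_derivative_inner[OF a tangent_has_derivative[OF s, THEN has_vector_derivative_at_within]]
  by simp_all

lemma Ds_gamma_curve:
  assumes s: "s \<in> {0..2*L}"
  shows "Ds L (gamma_curve x0 L) s = tangent s"
  unfolding Ds_def using L_pos s
    has_vector_derivative_at_within[OF gamma_curve_has_derivative[OF in_domain[OF s]]]
  by (intro vector_derivative_within_Icc_eqI) auto

lemma Ds_Ds_gamma_curve:
  assumes s: "s \<in> {0..2*L}"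
  shows "Ds L (Ds L (gamma_curve x0 L)) s = (- curv s) *\<^sub>R unit_normal s"
  unfolding Ds_def[of L "Ds L _"] using L_pos s Ds_gamma_curve
    has_vector_derivative_at_within[OF tangent_has_derivative[OF in_domain[OF s]]]
  by (intro vector_derivative_within_Icc_eqI[where g=tangent]) auto

lemma curvature_gamma_curve:
  assumes s: "s \<in> {0..2*L}"
  shows "curvature L (gamma_curve x0 L) s = curv s"
proof -
  have "cross2 (tangent s) ((- curv s) *\<^sub>R unit_normal s) = curv s * inner (tangent s) (tangent s)"
    by (simp add: cross2_def perp_tangent[symmetric] perp_def inner_prod_eq algebra_simps)
  then show ?thesis
    by (simp add: curvature_def Ds_gamma_curve[OF s] Ds_Ds_gamma_curve[OF s] inner_perp norm_tangent
        frame_orthonormal)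
qed

lemma normal_gamma_curve: "s \<in> {0..2*L} \<Longrightarrow> normal L (gamma_curve x0 L) s = unit_normal s"
  by (simp add: normal_def Ds_gamma_curve norm_tangent perp_tangent)

end

section \<open>The second variation in the Frenet frame\<close>

lemma cross2_in_frame:
  assumes "(fst T)\<^sup>2 + (snd T)\<^sup>2 = 1"
  shows "cross2 a b = inner a (perp T) * inner b T - inner a T * inner b (perp T)"
proof -
  have "inner a (perp T) * inner b T - inner a T * inner b (perp T) = ((fst T)\<^sup>2 + (snd T)\<^sup>2) * cross2 a b"
    by (simp add: inner_prod_eq perp_def cross2_def power2_eq_square algebra_simps)
  then show ?thesis using assms by simp
qed

lemma inner_in_frame:
  assumes "(fst T)\<^sup>2 + (snd T)\<^sup>2 = 1"
  shows "inner a b = inner a (perp T) * inner b (perp T) + inner a T * inner b T"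
proof -
  have "inner a (perp T) * inner b (perp T) + inner a T * inner b T = ((fst T)\<^sup>2 + (snd T)\<^sup>2) * inner a b"
    by (simp add: inner_prod_eq perp_def power2_eq_square algebra_simps)
  then show ?thesis using assms by simp
qed

text \<open>\<open>energy_density_dtt\<close> along an arc-length curve with unit tangent \<open>T\<close> and curvature \<open>H\<close>,
  written in the components \<open>n\<^sub>i\<close>, \<open>t\<^sub>i\<close> of \<open>\<partial>\<^sub>s\<^sup>i X\<close> and \<open>p\<^sub>i\<close>, \<open>q\<^sub>i\<close> of \<open>\<partial>\<^sub>s\<^sup>i X'\<close>
  along \<open>perp T\<close> and \<open>T\<close>; \<open>C\<close> is the area contribution \<open>cross2 \<gamma> X'\<^sub>s\<close>.\<close>
definition density_dtt_frame ::
  "real \<Rightarrow> real \<Rightarrow> real \<Rightarrow> real \<Rightarrow> real \<Rightarrow> real \<Rightarrow> real \<Rightarrow> real \<Rightarrow> real \<Rightarrow> real \<Rightarrow> real \<Rightarrow> real \<Rightarrow> real"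
where
  "density_dtt_frame lm H n0 t0 n1 t1 n2 t2 p0 p2 q1 C =
    (let P1 = 2 * t1; P2 = 2 * (n1\<^sup>2 + t1\<^sup>2) + 2 * q1;
         Q1 = H * t1 - n2; Q2 = H * q1 + 2 * (n1 * t2 - t1 * n2) - p2;
         A2 = p0 + 2 * (n0 * t1 - t0 * n1) + C
     in 2 * P1\<^sup>2 / H + 2 * P2 / H - 4 * P1 * Q1 / H\<^sup>2 - Q2 / H\<^sup>2 + 2 * Q1\<^sup>2 / H ^ 3 - lm / 2 * A2)"

definition index_form :: "real \<Rightarrow> real \<Rightarrow> real \<Rightarrow> real \<Rightarrow> real \<Rightarrow> real" where
  "index_form lm H p p1 p2 = (2 - lm) * H * p\<^sup>2 - 2 * p1\<^sup>2 / H + 2 * p2\<^sup>2 / H ^ 3"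

text \<open>An antiderivative of \<open>density_dtt_frame - index_form\<close>, found by integrating by parts; it
  differentiates correctly only because \<open>H\<close> solves the Euler--Lagrange equation.\<close>
definition boundary_form ::
  "real \<Rightarrow> real \<Rightarrow> real \<Rightarrow> real \<Rightarrow> real \<Rightarrow> real \<Rightarrow> real \<Rightarrow> real \<Rightarrow> real \<Rightarrow> real \<Rightarrow> real \<Rightarrow> real"
where
  "boundary_form lm H H' n0 n1 t0 t1 p0 p1 q0 C =
     2 * n0 * (n1 + H * t0) / H + 2 * t0 * (t1 - H * n0) / H
     + 2 * t0\<^sup>2 * H' / H\<^sup>2 - 4 * H' * (n1 + H * t0) * t0 / H ^ 3
     - 2 * (n1 + H * t0) * (t1 - H * n0) / H\<^sup>2 + (2 - lm) * n0 * t0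
     + 2 * q0 / H + p1 / H\<^sup>2 + 2 * p0 * H' / H ^ 3 - lm / 2 * C"

lemma energy_density_dtt_in_frame:
  fixes J :: jet
  assumes unit: "(fst T)\<^sup>2 + (snd T)\<^sup>2 = 1" and "0 < H"
    and J1: "J 1 0 = T" and J2: "J 2 0 = (- H) *\<^sub>R perp T"
  shows "energy_density_dtt lm J =
    density_dtt_frame lm H (inner (J 0 1) (perp T)) (inner (J 0 1) T)
      (inner (J 1 1) (perp T)) (inner (J 1 1) T) (inner (J 2 1) (perp T)) (inner (J 2 1) T)
      (inner (J 0 2) (perp T)) (inner (J 2 2) (perp T)) (inner (J 1 2) T) (cross2 (J 0 0) (J 1 2))"
proof -
  have e1: "inner T T = 1" using unit by (simp add: inner_prod_eq power2_eq_square)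
  have e2: "cross2 T ((- H) *\<^sub>R perp T) = H"
    using unit by (simp add: cross2_def perp_def power2_eq_square algebra_simps)
      (metis distrib_left mult.commute mult_1_right)
  have e3: "cross2 d ((- H) *\<^sub>R perp T) = H * inner d T"
    and e4: "cross2 T d = - inner d (perp T)" and e5: "cross2 d T = inner d (perp T)" for d
    by (simp_all add: cross2_def perp_def inner_prod_eq algebra_simps)
  have e6: "inner (J 1 1) (J 1 1) = (inner (J 1 1) (perp T))\<^sup>2 + (inner (J 1 1) T)\<^sup>2"
    using inner_in_frame[OF unit, of "J 1 1" "J 1 1"] by (simp add: power2_eq_square)
  show ?thesis
    unfolding energy_density_dtt_def density_dtt_frame_def Let_def J1 J2 e1 e2 e3 e4 e5 e6
      cross2_in_frame[OF unit, of "J 0 1" "J 1 1"] cross2_in_frame[OF unit, of "J 1 1" "J 2 1"]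
    by (simp add: inner_commute algebra_simps)
qed

lemma boundary_form_has_derivative:
  fixes H H' n0 n1 t0 t1 p0 p1 q0 C :: "real \<Rightarrow> real"
  assumes "(H has_real_derivative H' s) (at s within S)"
    and "(H' has_real_derivative 3 * (H' s)\<^sup>2 / H s + (2 - lm) * (H s) ^ 3 / 2) (at s within S)"
    and "(n0 has_real_derivative n1 s + H s * t0 s) (at s within S)"
    and "(t0 has_real_derivative t1 s - H s * n0 s) (at s within S)"
    and "(n1 has_real_derivative n2 + H s * t1 s) (at s within S)"
    and "(t1 has_real_derivative t2 - H s * n1 s) (at s within S)"
    and "(p0 has_real_derivative p1 s + H s * q0 s) (at s within S)"
    and "(q0 has_real_derivative q1 - H s * p0 s) (at s within S)"
    and "(p1 has_real_derivative p2 + H s * q1) (at s within S)"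
    and "(C has_real_derivative C' - p0 s) (at s within S)"
    and H: "0 < H s"
  shows "((\<lambda>s. boundary_form lm (H s) (H' s) (n0 s) (n1 s) (t0 s) (t1 s) (p0 s) (p1 s) (q0 s) (C s))
          has_real_derivative
            density_dtt_frame lm (H s) (n0 s) (t0 s) (n1 s) (t1 s) n2 t2 (p0 s) p2 q1 C'
            - index_form lm (H s) (n0 s) (n1 s + H s * t0 s)
                (n2 + 2 * H s * t1 s + H' s * t0 s - (H s)\<^sup>2 * n0 s)) (at s within S)"
  unfolding boundary_form_def density_dtt_frame_def index_form_def Let_def
  by (rule DERIV_cong, (rule derivative_eq_intros assms refl | (use H in simp; fail))+)
     (use H in \<open>simp add: field_simps power2_eq_square power3_eq_cube\<close>)

section \<open>Admissible variations of \<open>\<gamma>\<close>\<close>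

locale gamma_variation = gamma_params x0 L + smooth_variation L T D
  for x0 L T :: real and D :: "nat \<Rightarrow> nat \<Rightarrow> real \<Rightarrow> real \<Rightarrow> real \<times> real" +
  assumes initial: "\<And>s. s \<in> {0..2*L} \<Longrightarrow> D 0 0 s 0 = gamma_curve x0 L s"
    and admissible: "\<And>t. t \<in> {-T..T} \<Longrightarrow> admissible x0 L (\<lambda>s. D 0 0 s t)"
begin

lemma initial_D_1_0:
  assumes s: "s \<in> {0..2*L}"
  shows "D 1 0 s 0 = tangent s"
proof -
  have "(gamma_curve x0 L has_vector_derivative tangent s) (at s within {0..2*L})"
    by (rule has_vector_derivative_at_within[OF gamma_curve_has_derivative[OF in_domain[OF s]]])
  from has_vector_derivative_Icc_unique[OF _ s D_ds[OF s zero_in_time_interval] this]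
  have "D (Suc 0) 0 s 0 = tangent s"
    using L_pos initial by auto
  then show ?thesis by simp
qed

lemma initial_D_2_0:
  assumes s: "s \<in> {0..2*L}"
  shows "D 2 0 s 0 = (- curv s) *\<^sub>R unit_normal s"
proof -
  have "(tangent has_vector_derivative (- curv s) *\<^sub>R unit_normal s) (at s within {0..2*L})"
    by (rule has_vector_derivative_at_within[OF tangent_has_derivative[OF in_domain[OF s]]])
  from has_vector_derivative_Icc_unique[OF _ s D_ds[OF s zero_in_time_interval] this]
  have "D (Suc 1) 0 s 0 = (- curv s) *\<^sub>R unit_normal s"
    using L_pos initial_D_1_0 by auto
  then show ?thesis by (simp add: numeral_2_eq_2)
qed

text \<open>Normal and tangential components of \<open>\<partial>\<^sub>s\<^sup>j \<partial>\<^sub>t\<^sup>m V\<close> at \<open>t = 0\<close>; \<open>m = 1, 2\<close> give the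
  fields \<open>X\<close> and \<open>X'\<close>, so that \<open>\<phi> = Xn 1 0\<close> and \<open>\<psi> = Xn 2 0\<close>.\<close>
definition Xn :: "nat \<Rightarrow> nat \<Rightarrow> real \<Rightarrow> real" where
  "Xn m j s = inner (D j m s 0) (unit_normal s)"

definition Xt :: "nat \<Rightarrow> nat \<Rightarrow> real \<Rightarrow> real" where
  "Xt m j s = inner (D j m s 0) (tangent s)"

text \<open>The derivative lemmas take the index \<open>j'\<close> of the derivative separately, so that they also
  apply to numerals such as \<open>Xn 1 2\<close>, which are not syntactically of the form \<open>Suc j\<close>.\<close>
lemma Xn_has_derivative:
  assumes "s \<in> {0..2*L}" and "j' = Suc j"
  shows "(Xn m j has_real_derivative Xn m j' s + curv s * Xt m j s) (at s within {0..2*L})"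
  unfolding Xn_def[abs_def] Xt_def assms(2)
  using T_pos by (intro inner_frame_has_derivative(1) in_domain D_ds assms(1)) auto

lemma Xt_has_derivative:
  assumes "s \<in> {0..2*L}" and "j' = Suc j"
  shows "(Xt m j has_real_derivative Xt m j' s - curv s * Xn m j s) (at s within {0..2*L})"
  unfolding Xt_def[abs_def] Xn_def assms(2)
  using T_pos by (intro inner_frame_has_derivative(2) in_domain D_ds assms(1)) auto

lemma Ds_Xn:
  assumes f: "\<forall>s\<in>{0..2*L}. f s = Xn m 0 s" and s: "s \<in> {0..2*L}"
  shows "Ds L f s = Xn m 1 s + curv s * Xt m 0 s"
  unfolding Ds_def using L_pos s f Xn_has_derivative[OF s, of 1 0 m]
  by (intro vector_derivative_within_Icc_eqI[where g="Xn m 0"])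
     (auto simp: has_real_derivative_iff_has_vector_derivative)

lemma Ds_Ds_Xn:
  assumes f: "\<forall>s\<in>{0..2*L}. f s = Xn m 0 s" and s: "s \<in> {0..2*L}"
  shows "Ds L (Ds L f) s
           = Xn m 2 s + 2 * curv s * Xt m 1 s + curv' s * Xt m 0 s - (curv s)\<^sup>2 * Xn m 0 s"
proof -
  have "((\<lambda>s. Xn m 1 s + curv s * Xt m 0 s) has_real_derivative
          Xn m 2 s + curv s * Xt m 1 s + (curv' s * Xt m 0 s + curv s * (Xt m 1 s - curv s * Xn m 0 s)))
          (at s within {0..2*L})"
    using curv_has_derivative[OF in_domain[OF s], THEN has_field_derivative_at_within]
    by (auto intro!: derivative_eq_intros Xn_has_derivative Xt_has_derivative s simp: numeral_2_eq_2)
  then show ?thesis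
    unfolding Ds_def[of L "Ds L f"] using L_pos s Ds_Xn[OF f]
    by (intro vector_derivative_within_Icc_eqI[where g="\<lambda>s. Xn m 1 s + curv s * Xt m 0 s"])
       (auto simp: has_real_derivative_iff_has_vector_derivative power2_eq_square algebra_simps)
qed

lemma normal_components:
  assumes s: "s \<in> {0..2*L}"
  shows "vector_derivative (\<lambda>t. D 0 0 s t) (at 0 within {-T..T})
           = a *\<^sub>R normal L (gamma_curve x0 L) s + b *\<^sub>R Ds L (gamma_curve x0 L) s \<Longrightarrow> a = Xn 1 0 s"
    and "vector_derivative (\<lambda>t. vector_derivative (\<lambda>t. D 0 0 s t) (at t within {-T..T}))
           (at 0 within {-T..T})
           = a *\<^sub>R normal L (gamma_curve x0 L) s + b *\<^sub>R Ds L (gamma_curve x0 L) s \<Longrightarrow> a = Xn 2 0 s"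
proof -
  have vd1: "vector_derivative (\<lambda>t. D 0 0 s t) (at t within {-T..T}) = D 0 1 s t"
    if "t \<in> {-T..T}" for t
    using T_pos that D_dt[OF s that] by (intro vector_derivative_within_Icc_eqI) auto
  have vd2: "vector_derivative (\<lambda>t. vector_derivative (\<lambda>t. D 0 0 s t) (at t within {-T..T}))
               (at 0 within {-T..T}) = D 0 2 s 0"
  proof (rule vector_derivative_within_Icc_eqI[where g="\<lambda>t. D 0 1 s t"])
    show "((\<lambda>t. D 0 1 s t) has_vector_derivative D 0 2 s 0) (at 0 within {-T..T})"
      using D_dt[OF s zero_in_time_interval, of 0 1] by (simp add: numeral_2_eq_2)
  qed (use T_pos vd1 in auto)
  have "inner (a *\<^sub>R unit_normal s + b *\<^sub>R tangent s) (unit_normal s) = a"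
    by (simp add: inner_add_left frame_orthonormal)
  then show "vector_derivative (\<lambda>t. D 0 0 s t) (at 0 within {-T..T})
           = a *\<^sub>R normal L (gamma_curve x0 L) s + b *\<^sub>R Ds L (gamma_curve x0 L) s \<Longrightarrow> a = Xn 1 0 s"
    and "vector_derivative (\<lambda>t. vector_derivative (\<lambda>t. D 0 0 s t) (at t within {-T..T}))
           (at 0 within {-T..T})
           = a *\<^sub>R normal L (gamma_curve x0 L) s + b *\<^sub>R Ds L (gamma_curve x0 L) s \<Longrightarrow> a = Xn 2 0 s"
    using vd1[of 0] vd2 T_pos
    by (auto simp: Xn_def normal_gamma_curve[OF s] Ds_gamma_curve[OF s])
qed

definition boundary_term :: "real \<Rightarrow> real" where
  "boundary_term s =
     boundary_form (lam x0 L) (curv s) (curv' s) (Xn 1 0 s) (Xn 1 1 s) (Xt 1 0 s) (Xt 1 1 s)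
       (Xn 2 0 s) (Xn 2 1 s) (Xt 2 0 s) (cross2 (D 0 0 s 0) (D 0 2 s 0))"

lemma energy_density_dtt_initial:
  assumes s: "s \<in> {0..2*L}"
  shows "energy_density_dtt lm (jet s 0) =
    density_dtt_frame lm (curv s) (Xn 1 0 s) (Xt 1 0 s) (Xn 1 1 s) (Xt 1 1 s) (Xn 1 2 s) (Xt 1 2 s)
      (Xn 2 0 s) (Xn 2 2 s) (Xt 2 1 s) (cross2 (D 0 0 s 0) (D 1 2 s 0))"
  using energy_density_dtt_in_frame[where J="jet s 0", OF tangent_unit curv_pos[OF in_domain[OF s]]
      initial_D_1_0[OF s] initial_D_2_0[OF s, folded perp_tangent]]
  by (simp add: Xn_def Xt_def perp_tangent)

lemma boundary_term_has_derivative: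
  assumes s: "s \<in> {0..2*L}"
  shows "(boundary_term has_real_derivative
           energy_density_dtt (lam x0 L) (jet s 0)
           - index_form (lam x0 L) (curv s) (Xn 1 0 s) (Xn 1 1 s + curv s * Xt 1 0 s)
               (Xn 1 2 s + 2 * curv s * Xt 1 1 s + curv' s * Xt 1 0 s - (curv s)\<^sup>2 * Xn 1 0 s))
           (at s within {0..2*L})"
proof -
  have "cross2 (D 1 0 s 0) (D 0 2 s 0) = - Xn 2 0 s"
    using initial_D_1_0[OF s]
    by (simp add: Xn_def cross2_def tangent_def unit_normal_def inner_prod_eq algebra_simps)
  moreover have "((\<lambda>s. cross2 (D 0 0 s 0) (D 0 2 s 0)) has_real_derivative
      cross2 (D (Suc 0) 0 s 0) (D 0 2 s 0) + cross2 (D 0 0 s 0) (D (Suc 0) 2 s 0)) (at s within {0..2*L})"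
    by (rule has_real_derivative_cross2[OF D_ds D_ds]) (use s T_pos in auto)
  ultimately have area_term: "((\<lambda>s. cross2 (D 0 0 s 0) (D 0 2 s 0)) has_real_derivative
                                cross2 (D 0 0 s 0) (D 1 2 s 0) - Xn 2 0 s) (at s within {0..2*L})"
    by simp
  show ?thesis
    unfolding boundary_term_def[abs_def] energy_density_dtt_initial[OF s]
    by (intro boundary_form_has_derivative area_term Xn_has_derivative Xt_has_derivative s
        curv_has_derivative[OF in_domain[OF s], THEN has_field_derivative_at_within]
        curv'_has_derivative[OF in_domain[OF s], THEN has_field_derivative_at_within]
        curv_pos[OF in_domain[OF s]]) simp_all
qed

lemma integral_energy_density_dtt:
  "integral {0..2*L} (\<lambda>s. energy_density_dtt (lam x0 L) (jet s 0)) =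
     integral {0..2*L} (\<lambda>s. index_form (lam x0 L) (curv s) (Xn 1 0 s) (Xn 1 1 s + curv s * Xt 1 0 s)
                         (Xn 1 2 s + 2 * curv s * Xt 1 1 s + curv' s * Xt 1 0 s - (curv s)\<^sup>2 * Xn 1 0 s))
     + (boundary_term (2*L) - boundary_term 0)"
  (is "integral _ ?E = integral _ ?I + _")
proof -
  have ftc: "((\<lambda>s. ?E s - ?I s) has_integral boundary_term (2*L) - boundary_term 0) {0..2*L}"
    using L_pos boundary_term_has_derivative
    by (intro fundamental_theorem_of_calculus)
       (auto simp: has_real_derivative_iff_has_vector_derivative[symmetric])
  have "?E integrable_on {0..2*L}"
    using T_pos by (intro integrable_continuous_interval continuous_on_jet_energy_densities) auto
  moreover from integrable_diff[OF this has_integral_integrable[OF ftc]]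
  have "?I integrable_on {0..2*L}"
    by simp
  ultimately show ?thesis
    using integral_diff[of ?E "{0..2*L}" ?I] integral_unique[OF ftc] by simp
qed

lemma ends_fixed:
  assumes "t \<in> {-T..T}"
  shows "D 0 0 0 t = (x0, 0)" and "D 0 0 (2*L) t = (- x0, 0)"
  using admissible[OF assms] by (simp_all add: admissible_def)

lemma variation_vanishes_at_ends:
  assumes e: "e \<in> {0, 2*L}"
  shows "D 0 1 e 0 = 0" and "D 0 2 e 0 = 0"
proof -
  have e': "e \<in> {0..2*L}" using e L_pos by auto
  obtain c where c: "\<And>t. t \<in> {-T..T} \<Longrightarrow> D 0 0 e t = c"
    using e ends_fixed by blast
  have "D 0 (Suc 0) e t = 0" if t: "t \<in> {-T..T}" for t
    by (rule has_vector_derivative_Icc_unique[OF _ t D_dt[OF e' t] has_vector_derivative_const])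
       (use T_pos c in auto)
  then have D01: "D 0 1 e t = 0" if "t \<in> {-T..T}" for t
    using that by simp
  then show "D 0 1 e 0 = 0" using zero_in_time_interval by simp
  have "D 0 (Suc 1) e 0 = 0"
    by (rule has_vector_derivative_Icc_unique[OF _ zero_in_time_interval
          D_dt[OF e' zero_in_time_interval] has_vector_derivative_const])
       (use T_pos D01 in auto)
  then show "D 0 2 e 0 = 0" by (simp add: numeral_2_eq_2)
qed

lemma tangent_height_at_ends:
  shows "snd (D 1 1 0 0) = 0" and "0 \<le> snd (D 1 2 0 0)"
    and "snd (D 1 1 (2*L) 0) = 0" and "snd (D 1 2 (2*L) 0) \<le> 0"
proof -
  have L2: "0 < 2*L" and e: "0 \<in> {0..2*L}" "2*L \<in> {0..2*L}" using L_pos by auto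
  have height_pos: "0 < snd (D 0 0 s t)" if "s \<in> {0<..<2*L}" "t \<in> {-T..T}" for s t
    using admissible[OF that(2)] that(1) by (auto simp: admissible_def)
  have dt1: "((\<lambda>t. snd (D 1 0 e t)) has_real_derivative snd (D 1 1 e t)) (at t within {-T..T})"
    if "e \<in> {0..2*L}" "t \<in> {-T..T}" for e t
    using has_real_derivative_snd[OF D_dt[OF that, of 1 0]] by simp
  have dt2: "((\<lambda>t. snd (D 1 1 e t)) has_real_derivative snd (D 1 2 e 0)) (at 0 within {-T..T})"
    if "e \<in> {0..2*L}" for e
    using has_real_derivative_snd[OF D_dt[OF that zero_in_time_interval, of 1 1]]
    by (simp add: numeral_2_eq_2)
  have initial_height: "snd (D 1 0 0 0) = 0" "snd (D 1 0 (2*L) 0) = 0"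
    using initial_D_1_0[OF e(1)] initial_D_1_0[OF e(2)] by (simp_all add: frame_ends)
  have "snd (D 1 0 0 0) \<le> snd (D 1 0 0 t)" if t: "t \<in> {-T..T}" for t
    using has_real_derivative_snd[OF D_ds[OF e(1) t, of 0 0]] ends_fixed[OF t] height_pos[OF _ t]
      initial_height
    by (auto intro!: has_real_derivative_nonneg_at_left_end[OF L2, where h="\<lambda>s. snd (D 0 0 s t)"])
  from interior_minimum_second_derivative[OF T_pos this dt1[OF e(1)] dt2[OF e(1)]]
  show "snd (D 1 1 0 0) = 0" "0 \<le> snd (D 1 2 0 0)" by simp_all
  have "- snd (D 1 0 (2*L) 0) \<le> - snd (D 1 0 (2*L) t)" if t: "t \<in> {-T..T}" for t
    using has_real_derivative_snd[OF D_ds[OF e(2) t, of 0 0]] ends_fixed[OF t] height_pos[OF _ t]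
      initial_height
    by (auto intro!: has_real_derivative_nonpos_at_right_end[OF L2, where h="\<lambda>s. snd (D 0 0 s t)"])
  from interior_minimum_second_derivative[OF T_pos this
      DERIV_minus[OF dt1[OF e(2)]] DERIV_minus[OF dt2[OF e(2)]]]
  show "snd (D 1 1 (2*L) 0) = 0" "snd (D 1 2 (2*L) 0) \<le> 0" by simp_all
qed

lemma components_at_ends:
  assumes "e \<in> {0, 2*L}"
  shows "Xn 1 0 e = 0" "Xt 1 0 e = 0" "Xn 2 0 e = 0" "Xt 2 0 e = 0" "Xn 1 1 e = 0"
  using variation_vanishes_at_ends[OF assms] tangent_height_at_ends assms
  by (auto simp: Xn_def Xt_def frame_ends inner_prod_eq)

lemma boundary_term_at_ends:
  shows "boundary_term 0 = Xn 2 1 0 / (curv 0)\<^sup>2"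
    and "boundary_term (2*L) = Xn 2 1 (2*L) / (curv (2*L))\<^sup>2"
  using components_at_ends[of 0] components_at_ends[of "2*L"] variation_vanishes_at_ends
  by (simp_all add: boundary_term_def boundary_form_def cross2_def)

lemma boundary_term_increases: "boundary_term 0 \<le> boundary_term (2*L)"
proof -
  have "Xn 2 1 0 \<le> 0" "0 \<le> Xn 2 1 (2*L)"
    using tangent_height_at_ends by (auto simp: Xn_def frame_ends inner_prod_eq)
  then show ?thesis
    unfolding boundary_term_at_ends
    using divide_nonpos_nonneg[OF _ zero_le_power2] divide_nonneg_nonneg[OF _ zero_le_power2]
    by (meson order.trans)
qed

lemma Ds_boundary_eq_boundary_term:
  assumes \<psi>: "\<forall>s\<in>{0..2*L}. \<psi> s = Xn 2 0 s"
  shows "Ds L \<psi> (2*L) / (curvature L (gamma_curve x0 L) (2*L))\<^sup>2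
           - Ds L \<psi> 0 / (curvature L (gamma_curve x0 L) 0)\<^sup>2 = boundary_term (2*L) - boundary_term 0"
proof -
  have ends: "0 \<in> {0..2*L}" "2*L \<in> {0..2*L}" using L_pos by auto
  then show ?thesis
    using Ds_Xn[OF \<psi> ends(1)] Ds_Xn[OF \<psi> ends(2)] components_at_ends
    by (simp add: curvature_gamma_curve boundary_term_at_ends)
qed

lemma second_variation_formula:
  assumes \<phi>: "\<forall>s\<in>{0..2*L}. \<phi> s = Xn 1 0 s" and \<psi>: "\<forall>s\<in>{0..2*L}. \<psi> s = Xn 2 0 s"
  shows "integral {0..2*L} (\<lambda>s. energy_density_dtt (lam x0 L) (jet s 0)) =
           integral {0..2*L} (\<lambda>s. index_form (lam x0 L) (curvature L (gamma_curve x0 L) s)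
                                 (\<phi> s) (Ds L \<phi> s) (Ds L (Ds L \<phi>) s))
           + (Ds L \<psi> (2*L) / (curvature L (gamma_curve x0 L) (2*L))\<^sup>2
              - Ds L \<psi> 0 / (curvature L (gamma_curve x0 L) 0)\<^sup>2)"
proof -
  have "integral {0..2*L} (\<lambda>s. index_form (lam x0 L) (curvature L (gamma_curve x0 L) s)
                               (\<phi> s) (Ds L \<phi> s) (Ds L (Ds L \<phi>) s))
        = integral {0..2*L} (\<lambda>s. index_form (lam x0 L) (curv s) (Xn 1 0 s) (Xn 1 1 s + curv s * Xt 1 0 s)
                         (Xn 1 2 s + 2 * curv s * Xt 1 1 s + curv' s * Xt 1 0 s - (curv s)\<^sup>2 * Xn 1 0 s))"
    using \<phi> by (intro integral_cong) (simp add: curvature_gamma_curve Ds_Xn[OF \<phi>] Ds_Ds_Xn[OF \<phi>])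
  then show ?thesis
    unfolding integral_energy_density_dtt Ds_boundary_eq_boundary_term[OF \<psi>] by simp
qed

lemma second_variation_boundary_nonneg:
  assumes \<psi>: "\<forall>s\<in>{0..2*L}. \<psi> s = Xn 2 0 s"
  shows "0 \<le> Ds L \<psi> (2*L) / (curvature L (gamma_curve x0 L) (2*L))\<^sup>2
              - Ds L \<psi> 0 / (curvature L (gamma_curve x0 L) 0)\<^sup>2"
  using boundary_term_increases unfolding Ds_boundary_eq_boundary_term[OF \<psi>] by simp

end

lemma obtain_gamma_variation:
  assumes "0 < 3 * x0" "3 * x0 < L" "0 < T" "smooth_on_rect {0..2*L} {-T..T} V"
    and "\<forall>s\<in>{0..2*L}. V s 0 = gamma_curve x0 L s" "\<forall>t\<in>{-T..T}. admissible x0 L (\<lambda>s. V s t)"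
  obtains D where "V = D 0 0" and "gamma_variation x0 L T D"
  using assms(4) unfolding smooth_on_rect_def
proof (elim exE conjE, goal_cases)
  case (1 D)
  show ?thesis
  proof (rule that[of D])
    show "V = D 0 0" using 1 by simp
    show "gamma_variation x0 L T D"
      by (unfold_locales; use assms 1 in \<open>auto simp: admissible_def\<close>)
  qed
qed

theorem mainTheorem12:
  fixes x0 L T :: real
    and V :: "real \<Rightarrow> real \<Rightarrow> real \<times> real"
    and \<phi> \<phi>\<tau> \<psi> \<psi>\<tau> :: "real \<Rightarrow> real"
  assumes "0 < 3 * x0" and "3 * x0 < L"
    and "T > 0"
    and "smooth_on_rect {0..2*L} {-T..T} V"
    and "\<forall>s\<in>{0..2*L}. V s 0 = gamma_curve x0 L s"
    and "\<forall>t\<in>{-T..T}. admissible x0 L (\<lambda>s. V s t)"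
    and "\<forall>s\<in>{0..2*L}. vector_derivative (\<lambda>t. V s t) (at 0 within {-T..T})
           = \<phi> s *\<^sub>R normal L (gamma_curve x0 L) s
             + \<phi>\<tau> s *\<^sub>R Ds L (gamma_curve x0 L) s"
    and "\<forall>s\<in>{0..2*L}.
           vector_derivative (\<lambda>t. vector_derivative (\<lambda>t. V s t) (at t within {-T..T}))
             (at 0 within {-T..T})
           = \<psi> s *\<^sub>R normal L (gamma_curve x0 L) s
             + \<psi>\<tau> s *\<^sub>R Ds L (gamma_curve x0 L) s"
  shows "let \<gamma> = gamma_curve x0 L; lm = lam x0 L; H = curvature L \<gamma>;
             G = (\<lambda>t. Fenergy L (\<lambda>s. V s t) - lm * area L (\<lambda>s. V s t));
             I = integral {0..2*L} (\<lambda>s. (2 - lm) * H s * (\<phi> s)\<^sup>2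
                    - 2 * (Ds L \<phi> s)\<^sup>2 / H s + 2 * (Ds L (Ds L \<phi>) s)\<^sup>2 / (H s)^3);
             B = Ds L \<psi> (2*L) / (H (2*L))\<^sup>2 - Ds L \<psi> 0 / (H 0)\<^sup>2
         in (\<exists>G'. (\<forall>t\<in>{-T<..<T}. (G has_real_derivative G' t) (at t)) \<and>
                  (G' has_real_derivative (I + B)) (at 0))
            \<and> I + B \<ge> I"
proof -
  obtain D where V: "V = D 0 0" and "gamma_variation x0 L T D"
    using obtain_gamma_variation[OF assms(1-6)] .
  interpret gamma_variation x0 L T D by fact
  have \<phi>: "\<forall>s\<in>{0..2*L}. \<phi> s = Xn 1 0 s"
    using assms(7) unfolding V by (blast intro: normal_components(1))
  have \<psi>: "\<forall>s\<in>{0..2*L}. \<psi> s = Xn 2 0 s"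
    using assms(8) unfolding V by (blast intro: normal_components(2))
  show ?thesis
    unfolding Let_def V
    using energy_has_derivative second_variation_boundary_nonneg[OF \<psi>]
      energy_dt_has_derivative[of "lam x0 L", unfolded second_variation_formula[OF \<phi> \<psi>]]
    by (intro conjI exI[of _ "\<lambda>t. integral {0..2*L} (\<lambda>s. energy_density_dt (lam x0 L) (jet s t))"])
       (auto simp: index_form_def)
qed

end
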